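(* In the setting described in the context, let $d\in\mathcal{B}_2$ be a metric on $A$. Then the function $$\sigma(x,y)=d(x,\cdot)+d(y,\cdot)-d(x,y)-d(\cdot,\cdot)+m$$ is a $\Sigma_m$-proximity on $A$.
   Context: $A$ is a nonempty set (possibly infinite); $m\in\mathbb{R}$. A metric on $A$ is a function $d:A^2\to\mathbb{R}$ such that for all $x,y,z\in A$: $d(x,y)=0$ iff $x=y$, and $d(x,y)+d(x,z)-d(y,z)\ge0$ (metrics are symmetric). $\mathcal{B}_1$ is a set of functions $A\to\mathbb{R}$ forming a real linear space containing all constant functions, and $\mu:\mathcal{B}_1\to\mathbb{R}$ is a linear functional with $\mu(c)=c$ for every constant function $c$ and monotone: if $f,g\in\mathcal{B}_1$ and $f\ge g$ pointwise, then $\mu(f)\ge\mu(g)$. For $f:A^2\to\mathbb{R}$ such that $y\mapsto f(x,y)$ lies in $\mathcal{B}_1$ for every $x$, write $f(x,\cdot)=\mu(y\mapsto f(x,y))$, a function of $x$. $\mathcal{B}_2$ is a set of functions $A^2\to\mathbb{R}$ forming a real linear space that contains all constant functions and all functions $(x,y)\mapsto h(x)$ and $(x,y)\mapsto h(y)$ with $h\in\mathcal{B}_1$, and such that for every $f\in\mathcal{B}_2$: $y\mapsto f(x,y)\in\mathcal{B}_1$ for every $x$, $x\mapsto f(x,\cdot)\in\mathcal{B}_1$, and $x\mapsto f(x,x)\in\mathcal{B}_1$. For a symmetric $d\in\mathcal{B}_2$, $d(\cdot,\cdot)=\mu(x\mapsto d(x,\cdot))$ (a real number). A function $\sigma\in\mathcal{B}_2$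 is a $\Sigma_m$-proximity on $A$ if for all $x,y,z\in A$: (1) $\sigma(x,\cdot)=m$; (2) $\sigma(x,y)+\sigma(x,z)-\sigma(y,z)\le\sigma(x,x)$, with strict inequality whenever $z=y$ and $x\ne y$. *)

theory Defs
  imports Complex_Main
begin

text \<open>The set A is modelled by the (nonempty) type 'a.\<close>

definition metric_fun :: "('a \<Rightarrow> 'a \<Rightarrow> real) \<Rightarrow> bool" where
  "metric_fun d \<longleftrightarrow> (\<forall>x y. d x y = 0 \<longleftrightarrow> x = y) \<and>
     (\<forall>x y z. d x y + d x z - d y z \<ge> 0)"

definition lin_space :: "('b \<Rightarrow> real) set \<Rightarrow> bool" where
  "lin_space V \<longleftrightarrow> (\<forall>f\<in>V. \<forall>g\<in>V. (\<lambda>x. f x + g x) \<in> V) \<and>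
     (\<forall>f\<in>V. \<forall>c::real. (\<lambda>x. c * f x) \<in> V)"

definition B1_space :: "('a \<Rightarrow> real) set \<Rightarrow> bool" where
  "B1_space B1 \<longleftrightarrow> lin_space B1 \<and> (\<forall>c::real. (\<lambda>_. c) \<in> B1)"

definition mean_functional :: "('a \<Rightarrow> real) set \<Rightarrow> (('a \<Rightarrow> real) \<Rightarrow> real) \<Rightarrow> bool" where
  "mean_functional B1 \<mu> \<longleftrightarrow>
     (\<forall>f\<in>B1. \<forall>g\<in>B1. \<mu> (\<lambda>x. f x + g x) = \<mu> f + \<mu> g) \<and>
     (\<forall>f\<in>B1. \<forall>c. \<mu> (\<lambda>x. c * f x) = c * \<mu> f) \<and>
     (\<forall>c. \<mu> (\<lambda>_. c) = c) \<and>
     (\<forall>f\<in>B1. \<forall>g\<in>B1. (\<forall>x. f x \<ge> g x) \<longrightarrow> \<mu> f \<ge> \<mu> g)"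

definition pmean :: "(('a \<Rightarrow> real) \<Rightarrow> real) \<Rightarrow> ('a \<Rightarrow> 'a \<Rightarrow> real) \<Rightarrow> 'a \<Rightarrow> real" where
  "pmean \<mu> f x = \<mu> (\<lambda>y. f x y)"

definition tmean :: "(('a \<Rightarrow> real) \<Rightarrow> real) \<Rightarrow> ('a \<Rightarrow> 'a \<Rightarrow> real) \<Rightarrow> real" where
  "tmean \<mu> f = \<mu> (\<lambda>x. pmean \<mu> f x)"

definition B2_space :: "('a \<Rightarrow> real) set \<Rightarrow> (('a \<Rightarrow> real) \<Rightarrow> real) \<Rightarrow> ('a \<Rightarrow> 'a \<Rightarrow> real) set \<Rightarrow> bool" where
  "B2_space B1 \<mu> B2 \<longleftrightarrow>
     (\<forall>f\<in>B2. \<forall>g\<in>B2. (\<lambda>x y. f x y + g x y) \<in> B2) \<and>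
     (\<forall>f\<in>B2. \<forall>c::real. (\<lambda>x y. c * f x y) \<in> B2) \<and>
     (\<forall>c::real. (\<lambda>_ _. c) \<in> B2) \<and>
     (\<forall>h\<in>B1. (\<lambda>x y. h x) \<in> B2 \<and> (\<lambda>x y. h y) \<in> B2) \<and>
     (\<forall>f\<in>B2. (\<forall>x. (\<lambda>y. f x y) \<in> B1) \<and> (\<lambda>x. pmean \<mu> f x) \<in> B1 \<and> (\<lambda>x. f x x) \<in> B1)"

definition sigma_proximity ::
  "(('a \<Rightarrow> real) \<Rightarrow> real) \<Rightarrow> ('a \<Rightarrow> 'a \<Rightarrow> real) set \<Rightarrow> real \<Rightarrow> ('a \<Rightarrow> 'a \<Rightarrow> real) \<Rightarrow> bool" where
  "sigma_proximity \<mu> B2 m \<sigma> \<longleftrightarrow> \<sigma> \<in> B2 \<and>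
     (\<forall>x. pmean \<mu> \<sigma> x = m) \<and>
     (\<forall>x y z. \<sigma> x y + \<sigma> x z - \<sigma> y z \<le> \<sigma> x x) \<and>
     (\<forall>x y. x \<noteq> y \<longrightarrow> \<sigma> x y + \<sigma> x y - \<sigma> y y < \<sigma> x x)"

end

theory Submission
  imports Defs
begin

text \<open>Writing \<open>\<sigma>(x,y) = d(x,\<cdot>) + d(y,\<cdot>) - d(x,y) - d(\<cdot>,\<cdot>) + m\<close>, the terms depending on one
  variable only cancel in \<open>\<sigma>(x,x) - (\<sigma>(x,y) + \<sigma>(x,z) - \<sigma>(y,z))\<close>, which equals
  \<open>d(x,y) + d(x,z) - d(y,z) - d(x,x)\<close>; so the proximity inequality is the triangle inequality of \<open>d\<close>,
  and its strict form for \<open>z = y\<close> is the positivity of \<open>d(x,y)\<close>. The normalisation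
  \<open>\<sigma>(x,\<cdot>) = m\<close> follows from linearity of \<open>\<mu>\<close>, since \<open>\<mu>\<close> of \<open>y \<mapsto> d(y,\<cdot>)\<close> is \<open>d(\<cdot>,\<cdot>)\<close>.\<close>

lemma metric_fun_diag_zero:
  assumes "metric_fun d"
  shows "d x x = 0"
  using assms unfolding metric_fun_def by auto

lemma metric_fun_triangle:
  assumes "metric_fun d"
  shows "d x y + d x z - d y z \<ge> 0"
  using assms unfolding metric_fun_def by auto

lemma metric_fun_pos:
  assumes "metric_fun d" and "x \<noteq> y"
  shows "d x y > 0"
proof -
  have "d x y \<noteq> 0"
    using assms unfolding metric_fun_def by auto
  moreover have "d x y + d x y - d y y \<ge> 0"
    using assms(1) by (rule metric_fun_triangle)
  ultimately show ?thesis
    using metric_fun_diag_zero[OF assms(1), of y] by linarith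
qed

lemma lin_space_diff:
  assumes "lin_space V" and "f \<in> V" and "g \<in> V"
  shows "(\<lambda>x. f x - g x) \<in> V"
proof -
  have add: "\<forall>f\<in>V. \<forall>g\<in>V. (\<lambda>x. f x + g x) \<in> V"
    and scale: "\<forall>f\<in>V. \<forall>c. (\<lambda>x. c * f x) \<in> V"
    using assms(1) unfolding lin_space_def by auto
  have "(\<lambda>x. -1 * g x) \<in> V"
    using scale assms(3) by blast
  then have "(\<lambda>x. f x + -1 * g x) \<in> V"
    using add[rule_format, OF assms(2)] by blast
  then show ?thesis by simp
qed

lemma mean_functional_diff:
  assumes "B1_space B1" and "mean_functional B1 \<mu>" and "f \<in> B1" and "g \<in> B1"
  shows "\<mu> (\<lambda>x. f x - g x) = \<mu> f - \<mu> g"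
proof -
  have add: "\<forall>f\<in>B1. \<forall>g\<in>B1. \<mu> (\<lambda>x. f x + g x) = \<mu> f + \<mu> g"
    and scale: "\<forall>f\<in>B1. \<forall>c. \<mu> (\<lambda>x. c * f x) = c * \<mu> f"
    using assms(2) unfolding mean_functional_def by auto
  have neg: "(\<lambda>x. -1 * g x) \<in> B1"
    using assms(1,4) unfolding B1_space_def lin_space_def by blast
  have "\<mu> (\<lambda>x. f x + -1 * g x) = \<mu> f + \<mu> (\<lambda>x. -1 * g x)"
    using add[rule_format, OF assms(3) neg] .
  also have "\<mu> (\<lambda>x. -1 * g x) = - \<mu> g"
    using scale[rule_format, OF assms(4), of "-1"] by simp
  finally show ?thesis by simp
qed

lemma mean_functional_add_const:
  assumes "B1_space B1" and "mean_functional B1 \<mu>" and "f \<in> B1"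
  shows "\<mu> (\<lambda>x. f x + c) = \<mu> f + c"
proof -
  have "(\<lambda>_. c) \<in> B1"
    using assms(1) unfolding B1_space_def by blast
  then show ?thesis
    using assms(2,3) unfolding mean_functional_def by auto
qed

lemma B2_space_add:
  assumes "B2_space B1 \<mu> B2" and "f \<in> B2" and "g \<in> B2"
  shows "(\<lambda>x y. f x y + g x y) \<in> B2"
  using assms unfolding B2_space_def by blast

lemma B2_space_scale:
  assumes "B2_space B1 \<mu> B2" and "f \<in> B2"
  shows "(\<lambda>x y. c * f x y) \<in> B2"
  using assms unfolding B2_space_def by blast

lemma B2_space_diff:
  assumes "B2_space B1 \<mu> B2" and "f \<in> B2" and "g \<in> B2"
  shows "(\<lambda>x y. f x y - g x y) \<in> B2"
  using B2_space_add[OF assms(1,2) B2_space_scale[OF assms(1,3), of "-1"]] by simp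

lemma B2_space_add_const:
  assumes "B2_space B1 \<mu> B2" and "f \<in> B2"
  shows "(\<lambda>x y. f x y + c) \<in> B2"
proof -
  have "(\<lambda>_ _. c) \<in> B2"
    using assms(1) unfolding B2_space_def by blast
  from B2_space_add[OF assms this] show ?thesis .
qed

lemma B2_space_sum_B1:
  assumes "B2_space B1 \<mu> B2" and "h \<in> B1"
  shows "(\<lambda>x y. h x + h y) \<in> B2"
proof -
  have "(\<lambda>x y. h x) \<in> B2" and "(\<lambda>x y. h y) \<in> B2"
    using assms unfolding B2_space_def by auto
  from B2_space_add[OF assms(1) this] show ?thesis .
qed

lemma B2_space_pmean_in_B1:
  assumes "B2_space B1 \<mu> B2" and "f \<in> B2"
  shows "pmean \<mu> f \<in> B1"
  using assms unfolding B2_space_def by simp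

lemma B2_space_row_in_B1:
  assumes "B2_space B1 \<mu> B2" and "f \<in> B2"
  shows "f x \<in> B1"
  using assms unfolding B2_space_def by simp

definition proximity_of_metric ::
  "(('a \<Rightarrow> real) \<Rightarrow> real) \<Rightarrow> ('a \<Rightarrow> 'a \<Rightarrow> real) \<Rightarrow> real \<Rightarrow> 'a \<Rightarrow> 'a \<Rightarrow> real" where
  "proximity_of_metric \<mu> d m x y = pmean \<mu> d x + pmean \<mu> d y - d x y - tmean \<mu> d + m"

lemma proximity_of_metric_defect:
  "proximity_of_metric \<mu> d m x x
     - (proximity_of_metric \<mu> d m x y + proximity_of_metric \<mu> d m x z - proximity_of_metric \<mu> d m y z)
   = d x y + d x z - d y z - d x x"
  unfolding proximity_of_metric_def by simp

lemma proximity_of_metric_in_B2: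
  assumes "B2_space B1 \<mu> B2" and "d \<in> B2"
  shows "proximity_of_metric \<mu> d m \<in> B2"
proof -
  have "(\<lambda>x y. pmean \<mu> d x + pmean \<mu> d y) \<in> B2"
    using assms by (intro B2_space_sum_B1 B2_space_pmean_in_B1)
  then have "(\<lambda>x y. (pmean \<mu> d x + pmean \<mu> d y - d x y) + (m - tmean \<mu> d)) \<in> B2"
    using assms by (intro B2_space_add_const B2_space_diff)
  moreover have "proximity_of_metric \<mu> d m
      = (\<lambda>x y. (pmean \<mu> d x + pmean \<mu> d y - d x y) + (m - tmean \<mu> d))"
    unfolding proximity_of_metric_def by (intro ext) simp
  ultimately show ?thesis by simp
qed

lemma pmean_proximity_of_metric:
  assumes "B1_space B1" and "mean_functional B1 \<mu>" and "B2_space B1 \<mu> B2" and "d \<in> B2"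
  shows "pmean \<mu> (proximity_of_metric \<mu> d m) x = m"
proof -
  let ?p = "pmean \<mu> d"
  have p: "?p \<in> B1" and row: "d x \<in> B1"
    using assms(3,4) by (rule B2_space_pmean_in_B1, rule B2_space_row_in_B1)
  have "pmean \<mu> (proximity_of_metric \<mu> d m) x
      = \<mu> (\<lambda>y. (?p y - d x y) + (?p x - tmean \<mu> d + m))"
    unfolding pmean_def proximity_of_metric_def by (simp add: algebra_simps)
  also have "\<dots> = \<mu> ?p - \<mu> (d x) + (?p x - tmean \<mu> d + m)"
  proof -
    have "(\<lambda>y. ?p y - d x y) \<in> B1"
      using assms(1) p row unfolding B1_space_def by (blast intro: lin_space_diff)
    from mean_functional_add_const[OF assms(1,2) this]
    show ?thesis
      using mean_functional_diff[OF assms(1,2) p row] by simp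
  qed
  also have "\<dots> = m"
    unfolding tmean_def pmean_def by simp
  finally show ?thesis .
qed

theorem proposition2:
  fixes B1 :: "('a \<Rightarrow> real) set" and \<mu> :: "('a \<Rightarrow> real) \<Rightarrow> real"
    and B2 :: "('a \<Rightarrow> 'a \<Rightarrow> real) set" and d :: "'a \<Rightarrow> 'a \<Rightarrow> real" and m :: real
  assumes "B1_space B1" and "mean_functional B1 \<mu>" and "B2_space B1 \<mu> B2"
    and "d \<in> B2" and "metric_fun d"
  shows "sigma_proximity \<mu> B2 m
           (\<lambda>x y. pmean \<mu> d x + pmean \<mu> d y - d x y - tmean \<mu> d + m)"
proof -
  let ?\<sigma> = "proximity_of_metric \<mu> d m"
  have "?\<sigma> \<in> B2"
    using assms(3,4) by (rule proximity_of_metric_in_B2)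
  moreover have "pmean \<mu> ?\<sigma> x = m" for x
    using assms(1-4) by (rule pmean_proximity_of_metric)
  moreover have "?\<sigma> x y + ?\<sigma> x z - ?\<sigma> y z \<le> ?\<sigma> x x" for x y z
    using proximity_of_metric_defect[of \<mu> d m x y z] metric_fun_triangle[OF assms(5), of x y z]
      metric_fun_diag_zero[OF assms(5), of x] by linarith
  moreover have "?\<sigma> x y + ?\<sigma> x y - ?\<sigma> y y < ?\<sigma> x x" if "x \<noteq> y" for x y
    using proximity_of_metric_defect[of \<mu> d m x y y] metric_fun_pos[OF assms(5) that]
      metric_fun_diag_zero[OF assms(5), of x] metric_fun_diag_zero[OF assms(5), of y] by linarith
  ultimately have "sigma_proximity \<mu> B2 m ?\<sigma>"
    unfolding sigma_proximity_def by blast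
  then show ?thesis
    by (simp add: proximity_of_metric_def[abs_def])
qed

end
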